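(* The set $\mathrm{Ord}$ is not reduced to a point. More precisely: (i) for all $\alpha,\beta\in\mathrm{Ord}$, $\beta\le\alpha$ and $\alpha<\beta$ cannot both hold; (ii) for $m,n\in\mathbb N$, $m<n$ iff $\underline m<\underline n$, so the map $n\mapsto\underline n:\mathbb N\to\mathrm{Ord}$ is injective; (iii) for all $\alpha\in\mathrm{Ord}$ and $n>m$ in $\mathbb N$, it is impossible that $\mathrm{succ}^{(n)}(\alpha)=_{\mathrm{Ord}}\mathrm{succ}^{(m)}(\alpha)$.
   Context: Work constructively. Let $\mathfrak F$ be a set of index sets containing $\mathbb N$ and each $\mathbb N_k=\{n\in\mathbb N:n<k\}$ ($k\ge0$), closed (up to isomorphism) under finitely enumerated subsets, sets of finitely enumerated subsets, and disjoint unions indexed by elements of $\mathfrak F$. A finitely enumerated subset of $A$ is one given by a map $\mathbb N_k\to A$; write $F\subseteq_f I$. The set $\mathrm{ord}$ is inductively generated by $\underline 0$ and, for every family $(\alpha_i)_{i\in I}$ with $I\in\mathfrak F$, $\alpha_i\in\mathrm{ord}$, an element $\mathrm S(\alpha_i)_{i\in I}$; for such $\alpha$, $I_\alpha=I$ and $\alpha_i$ are its definitional subordinals; $I_{\underline 0}=\emptyset$. $\mathrm{succ}(\alpha)$ is $\mathrm S$ of the one-element family $(\alpha)$; $\mathrm{succ}^{(n)}$ is its $n$-fold iterate; $\underline{m+1}=\mathrm{succ}(\underline m)$. For a finite list $F$ in $I_\alpha$, $\alpha_F$ is the list of the $\alpha_i$, $i\in F$. Relations between an element and a nonempty finite list,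 by simultaneous induction: $\alpha\le\beta^1,\dots,\beta^m$ means $\alpha_i<\beta^1,\dots,\beta^m$ for all $i\in I_\alpha$; $\alpha<\beta^1,\dots,\beta^m$ means there exist $F_1\subseteq_f I_{\beta^1},\dots,F_m\subseteq_f I_{\beta^m}$, not all empty, with $\alpha\le\beta^1_{F_1},\dots,\beta^m_{F_m}$ (concatenated list); $\alpha\le\beta$, $\alpha<\beta$ are the case $m=1$. $\alpha=_{\mathrm{Ord}}\beta$ means $\alpha\le\beta$ and $\beta\le\alpha$; this is an equivalence relation compatible with $\le,<,\mathrm{succ}$, and $\mathrm{Ord}$ is the quotient with the induced relations and map. *)

theory Defs
  imports Main
begin

text \<open>Pre-ordinals over an index type 'i: the tree 0 or S I f, where the family
  is f restricted to the index set I.\<close>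

datatype 'i pord = OZero | OS "'i set" "'i \<Rightarrow> 'i pord"

fun idx :: "'i pord \<Rightarrow> 'i set" where
  "idx OZero = {}"
| "idx (OS I f) = I"

fun sub :: "'i pord \<Rightarrow> 'i \<Rightarrow> 'i pord" where
  "sub OZero i = OZero"
| "sub (OS I f) i = f i"

text \<open>Given the relation "gamma \<le> list" for a fixed gamma (argument L), the relation
  "gamma < beta^1,...,beta^m": there are finitely enumerated subsets F_j of I_{beta^j},
  not all empty, with gamma \<le> the concatenated list of the beta^j_{F_j}.\<close>

definition lt_via :: "('i pord list \<Rightarrow> bool) \<Rightarrow> 'i pord list \<Rightarrow> bool" where
  "lt_via L bs = (\<exists>Fs :: 'i list list. length Fs = length bs
      \<and> (\<forall>j<length bs. set (Fs ! j) \<subseteq> idx (bs ! j))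
      \<and> (\<exists>j<length bs. Fs ! j \<noteq> [])
      \<and> L (concat (map2 (\<lambda>b F. map (sub b) F) bs Fs)))"

primrec ord_le :: "'i pord \<Rightarrow> 'i pord list \<Rightarrow> bool" where
  "ord_le OZero bs = True"
| "ord_le (OS I f) bs = (\<forall>i\<in>I. lt_via (ord_le (f i)) bs)"

definition ord_lt :: "'i pord \<Rightarrow> 'i pord list \<Rightarrow> bool" where
  "ord_lt a bs = lt_via (ord_le a) bs"

definition ord_eq :: "'i pord \<Rightarrow> 'i pord \<Rightarrow> bool" where
  "ord_eq a b = (ord_le a [b] \<and> ord_le b [a])"

inductive in_ord :: "'i set set \<Rightarrow> 'i pord \<Rightarrow> bool" for FF where
  "in_ord FF OZero"
| "I \<in> FF \<Longrightarrow> (\<And>i. i \<in> I \<Longrightarrow> in_ord FF (f i)) \<Longrightarrow> in_ord FF (OS I f)"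

definition osucc :: "'i pord \<Rightarrow> 'i pord" where
  "osucc a = OS {undefined} (\<lambda>_. a)"

primrec onum :: "nat \<Rightarrow> 'i pord" where
  "onum 0 = OZero"
| "onum (Suc m) = osucc (onum m)"

definition index_family :: "'i set set \<Rightarrow> bool" where
  "index_family FF \<longleftrightarrow>
     (\<forall>I J (g::'i \<Rightarrow> 'i). I \<in> FF \<and> bij_betw g I J \<longrightarrow> J \<in> FF)
   \<and> (\<exists>I\<in>FF. \<exists>g::nat \<Rightarrow> 'i. bij_betw g UNIV I)
   \<and> (\<forall>k::nat. \<exists>I\<in>FF. \<exists>g::nat \<Rightarrow> 'i. bij_betw g {..<k} I)
   \<and> (\<forall>I\<in>FF. \<forall>xs. set xs \<subseteq> I \<longrightarrow> (\<exists>J\<in>FF. \<exists>g::'i \<Rightarrow> 'i. bij_betw g (set xs) J))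
   \<and> (\<forall>I\<in>FF. \<exists>J\<in>FF. \<exists>g::'i list \<Rightarrow> 'i. bij_betw g {xs. set xs \<subseteq> I} J)
   \<and> (\<forall>I\<in>FF. \<forall>J. (\<forall>i\<in>I. J i \<in> FF) \<longrightarrow>
        (\<exists>K\<in>FF. \<exists>g::'i \<times> 'i \<Rightarrow> 'i. bij_betw g (Sigma I J) K))"

end

theory Submission
  imports Defs "HOL-Library.Multiset"
begin

text \<open>Whether \<open>ord_le a bs\<close> holds depends only on the set of the \<open>bs\<close>, so we pass to
  relations \<open>le_set\<close> and \<open>lt_set\<close> between a pre-ordinal and a set \<open>S\<close>, where the
  witnesses of \<open>lt_set\<close> are finite nonempty sets of children of \<open>S\<close>. For these, \<open>\<le>\<close> is
  transitive and implied by \<open><\<close>, and the heart of the matter is that no nonempty finite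
  set \<open>U\<close> has all its elements below \<open>U\<close>: the witnesses would give a finite set of children
  of \<open>U\<close> with the same property, contradicting well-foundedness of the multiset extension
  of the child relation. Hence \<open>\<beta> \<le> \<alpha> < \<beta>\<close> is impossible, as it would give \<open>\<alpha> < \<alpha>\<close>, and
  the iterated successors are strictly increasing. None of this uses that the index
  sets come from \<open>FF\<close>, so the hypotheses on \<open>FF\<close> and \<open>in_ord\<close> are not needed.\<close>

definition children :: "'i pord set \<Rightarrow> 'i pord set" where
  "children S = {sub b i | b i. b \<in> S \<and> i \<in> idx b}"

primrec le_set :: "'i pord \<Rightarrow> 'i pord set \<Rightarrow> bool" where
  "le_set OZero S = True"
| "le_set (OS I f) S =
     (\<forall>i\<in>I. \<exists>T. finite T \<and> T \<noteq> {} \<and> T \<subseteq> children S \<and> le_set (f i) T)"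

definition lt_set :: "'i pord \<Rightarrow> 'i pord set \<Rightarrow> bool" where
  "lt_set a S = (\<exists>T. finite T \<and> T \<noteq> {} \<and> T \<subseteq> children S \<and> le_set a T)"

lemma le_set_OS: "le_set (OS I f) S = (\<forall>i\<in>I. lt_set (f i) S)"
  by (simp add: lt_set_def)

declare le_set.simps(2)[simp del] le_set_OS[simp]

lemma set_concat_map2_sub:
  assumes "length Fs = length bs"
  shows "set (concat (map2 (\<lambda>b F. map (sub b) F) bs Fs)) =
         {sub (bs ! j) i | j i. j < length bs \<and> i \<in> set (Fs ! j)}"
  using assms by (auto simp: set_zip)

lemma lt_via_imp_children:
  assumes "lt_via P bs"
  shows "\<exists>cs. cs \<noteq> [] \<and> set cs \<subseteq> children (set bs) \<and> P cs"
proof -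
  obtain Fs where len: "length Fs = length bs"
    and sel: "\<forall>j<length bs. set (Fs ! j) \<subseteq> idx (bs ! j)"
    and ne: "\<exists>j<length bs. Fs ! j \<noteq> []"
    and P: "P (concat (map2 (\<lambda>b F. map (sub b) F) bs Fs))"
    using assms unfolding lt_via_def by blast
  let ?cs = "concat (map2 (\<lambda>b F. map (sub b) F) bs Fs)"
  obtain j i where "j < length bs" "i \<in> set (Fs ! j)"
    using ne by (meson list.set_sel(1))
  then have "sub (bs ! j) i \<in> set ?cs"
    by (subst set_concat_map2_sub[OF len]) blast
  then have "?cs \<noteq> []" by (metis empty_iff empty_set)
  moreover have "set ?cs \<subseteq> children (set bs)"
    unfolding set_concat_map2_sub[OF len] using sel
    by (auto simp: children_def) (metis nth_mem subsetD)
  ultimately show ?thesis using P by blast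
qed

lemma children_list_selection:
  assumes "finite T" "T \<noteq> {}" "T \<subseteq> children (set bs)"
  shows "\<exists>Fs. length Fs = length bs \<and> (\<forall>j<length bs. set (Fs ! j) \<subseteq> idx (bs ! j))
           \<and> (\<exists>j<length bs. Fs ! j \<noteq> [])
           \<and> set (concat (map2 (\<lambda>b F. map (sub b) F) bs Fs)) = T"
proof -
  have "\<forall>x\<in>T. \<exists>j<length bs. \<exists>i\<in>idx (bs ! j). x = sub (bs ! j) i"
    using assms(3) unfolding children_def in_set_conv_nth by blast
  then obtain J Ix where JI: "\<And>x. x \<in> T \<Longrightarrow>
      J x < length bs \<and> Ix x \<in> idx (bs ! J x) \<and> x = sub (bs ! J x) (Ix x)"
    by metis
  obtain xs where xs: "set xs = T" using finite_list[OF assms(1)] by blast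
  define Fs where "Fs = map (\<lambda>j. map Ix (filter (\<lambda>x. J x = j) xs)) [0..<length bs]"
  have len: "length Fs = length bs" by (simp add: Fs_def)
  have Fs_nth: "\<And>j. j < length bs \<Longrightarrow> set (Fs ! j) = Ix ` {x \<in> T. J x = j}"
    by (auto simp: Fs_def xs)
  obtain x0 where x0: "x0 \<in> T" using assms(2) by blast
  then have "\<exists>j<length bs. Fs ! j \<noteq> []"
    using JI[OF x0] Fs_nth[of "J x0"] by (intro exI[of _ "J x0"]) auto
  moreover have "set (concat (map2 (\<lambda>b F. map (sub b) F) bs Fs)) = T"
    unfolding set_concat_map2_sub[OF len]
  proof safe
    fix j i assume "j < length bs" "i \<in> set (Fs ! j)"
    then obtain x where "x \<in> T" "J x = j" "i = Ix x" using Fs_nth by auto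
    then show "sub (bs ! j) i \<in> T" using JI by metis
  next
    fix x assume x: "x \<in> T"
    then show "\<exists>j i. x = sub (bs ! j) i \<and> j < length bs \<and> i \<in> set (Fs ! j)"
      using JI[OF x] Fs_nth[of "J x"] by blast
  qed
  moreover have "\<forall>j<length bs. set (Fs ! j) \<subseteq> idx (bs ! j)" using Fs_nth JI by auto
  ultimately show ?thesis using len by blast
qed

lemma lt_via_iff_children:
  assumes "\<And>cs. P cs \<longleftrightarrow> Q (set cs)"
  shows "lt_via P bs \<longleftrightarrow> (\<exists>T. finite T \<and> T \<noteq> {} \<and> T \<subseteq> children (set bs) \<and> Q T)"
proof
  assume "lt_via P bs"
  then show "\<exists>T. finite T \<and> T \<noteq> {} \<and> T \<subseteq> children (set bs) \<and> Q T"
    using lt_via_imp_children assms by (metis List.finite_set set_empty)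
next
  assume "\<exists>T. finite T \<and> T \<noteq> {} \<and> T \<subseteq> children (set bs) \<and> Q T"
  then obtain T where "finite T" "T \<noteq> {}" "T \<subseteq> children (set bs)" "Q T" by blast
  then show "lt_via P bs"
    using children_list_selection assms unfolding lt_via_def by metis
qed

lemma ord_le_iff_le_set: "ord_le a bs \<longleftrightarrow> le_set a (set bs)"
proof (induction a arbitrary: bs)
  case (OS I f)
  then show ?case
    by (simp add: lt_set_def lt_via_iff_children[where Q = "le_set (f _)"])
qed simp

lemma ord_lt_iff_lt_set: "ord_lt a bs \<longleftrightarrow> lt_set a (set bs)"
  unfolding ord_lt_def lt_set_def by (rule lt_via_iff_children) (rule ord_le_iff_le_set)

lemma children_mono: "S \<subseteq> S' \<Longrightarrow> children S \<subseteq> children S'"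
  by (auto simp: children_def)

lemma le_set_mono:
  assumes "le_set a S" "S \<subseteq> S'"
  shows "le_set a S'"
proof (cases a)
  case (OS I f)
  with assms children_mono[OF assms(2)] show ?thesis
    by (auto simp: lt_set_def) (meson order_trans)
qed simp

lemma lt_set_of_child:
  assumes "\<forall>b\<in>S. le_set b U" "t \<in> children S"
  shows "lt_set t U"
proof -
  obtain b i where "b \<in> S" "i \<in> idx b" "t = sub b i"
    using assms(2) by (auto simp: children_def)
  with assms(1) show ?thesis by (cases b) auto
qed

lemma lt_set_common_witness:
  assumes "finite T" "T \<noteq> {}" "\<forall>t\<in>T. lt_set t U"
  obtains W where "finite W" "W \<noteq> {}" "W \<subseteq> children U" "\<forall>t\<in>T. le_set t W"
proof -
  obtain V where V: "\<And>t. t \<in> T \<Longrightarrow>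
      finite (V t) \<and> V t \<noteq> {} \<and> V t \<subseteq> children U \<and> le_set t (V t)"
    using assms(3) unfolding lt_set_def by metis
  have "\<forall>t\<in>T. le_set t (\<Union>t\<in>T. V t)" using V le_set_mono by (metis UN_upper)
  with V assms(1,2) show thesis by (intro that[of "\<Union>t\<in>T. V t"]) auto
qed

lemma le_set_trans: "le_set a S \<Longrightarrow> \<forall>b\<in>S. le_set b U \<Longrightarrow> le_set a U"
proof (induction a arbitrary: S U)
  case (OS I f)
  show ?case unfolding le_set_OS
  proof
    fix i assume "i \<in> I"
    then obtain T where T: "finite T" "T \<noteq> {}" "T \<subseteq> children S" "le_set (f i) T"
      using OS.prems(1) by (auto simp: lt_set_def)
    then have "\<forall>t\<in>T. lt_set t U" using OS.prems(2) lt_set_of_child by blast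
    then obtain W where W: "finite W" "W \<noteq> {}" "W \<subseteq> children U" "\<forall>t\<in>T. le_set t W"
      using lt_set_common_witness[OF T(1,2)] by blast
    have "le_set (f i) W" using OS.IH[of "f i" T W] T(4) W(4) by simp
    with W show "lt_set (f i) U" unfolding lt_set_def by blast
  qed
qed simp

lemma lt_set_imp_le_set: "lt_set a S \<Longrightarrow> le_set a S"
proof (induction a arbitrary: S)
  case (OS I f)
  then obtain T where T: "finite T" "T \<noteq> {}" "T \<subseteq> children S" "le_set (OS I f) T"
    unfolding lt_set_def by blast
  show ?case unfolding le_set_OS
  proof
    fix i assume "i \<in> I"
    then have "le_set (f i) T" using T(4) OS.IH by simp
    with T show "lt_set (f i) S" unfolding lt_set_def by blast
  qed
qed simp

lemma le_set_refl: "le_set a {a}"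
proof (induction a)
  case (OS I f)
  show ?case unfolding le_set_OS
  proof
    fix i assume "i \<in> I"
    then have "{f i} \<subseteq> children {OS I f}" by (force simp: children_def)
    with OS.IH[of "f i"] show "lt_set (f i) {OS I f}" unfolding lt_set_def by blast
  qed
qed simp

definition child_rel :: "('i pord \<times> 'i pord) set" where
  "child_rel = {(f i, OS I f) | I f i. i \<in> I}"

lemma wf_child_rel: "wf child_rel"
proof (rule wfUNIVI)
  fix P :: "'i pord \<Rightarrow> bool" and x
  assume step: "\<forall>x. (\<forall>y. (y, x) \<in> child_rel \<longrightarrow> P y) \<longrightarrow> P x"
  show "P x"
  proof (induction x)
    case OZero
    then show ?case using step by (auto simp: child_rel_def)
  next
    case (OS I f)
    then show ?case using step[rule_format, of "OS I f"] by (auto simp: child_rel_def)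
  qed
qed

lemma mset_children_less:
  assumes "finite U" "U \<noteq> {}" "finite W" "W \<subseteq> children U"
  shows "(mset_set W, mset_set U) \<in> mult child_rel"
proof -
  have "\<exists>b\<in>#mset_set U. (w, b) \<in> child_rel" if "w \<in># mset_set W" for w
  proof -
    from that assms(3,4) obtain b i where "b \<in> U" "i \<in> idx b" "w = sub b i"
      by (auto simp: children_def)
    with assms(1) show ?thesis by (cases b) (auto simp: child_rel_def)
  qed
  with assms(1,2) show ?thesis
    using one_step_implies_mult[of "mset_set U" "mset_set W" child_rel "{#}"]
    by (simp add: mset_set_empty_iff)
qed

lemma no_finite_set_below_itself:
  "finite U \<Longrightarrow> U \<noteq> {} \<Longrightarrow> \<exists>u\<in>U. \<not> lt_set u U"
proof (induction "mset_set U" arbitrary: U rule: wf_induct[OF wf_mult[OF wf_child_rel]])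
  case (1 U)
  show ?case
  proof (rule ccontr)
    assume "\<not> (\<exists>u\<in>U. \<not> lt_set u U)"
    then obtain W where W: "finite W" "W \<noteq> {}" "W \<subseteq> children U" "\<forall>u\<in>U. le_set u W"
      using 1 lt_set_common_witness by metis
    then have "\<forall>w\<in>W. lt_set w W" using lt_set_of_child by blast
    moreover have "(mset_set W, mset_set U) \<in> mult child_rel"
      using mset_children_less 1 W by blast
    ultimately show False using 1(1) W by blast
  qed
qed

lemma lt_set_irrefl: "\<not> lt_set a {a}"
  using no_finite_set_below_itself[of "{a}"] by simp

lemma le_set_lt_set_contra:
  assumes "le_set b {a}" "lt_set a {b}"
  shows False
proof -
  obtain T where T: "finite T" "T \<noteq> {}" "T \<subseteq> children {b}" "le_set a T"
    using assms(2) unfolding lt_set_def by blast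
  then have "\<forall>t\<in>T. lt_set t {a}" using assms(1) lt_set_of_child by blast
  then obtain W where "finite W" "W \<noteq> {}" "W \<subseteq> children {a}" "\<forall>t\<in>T. le_set t W"
    using T lt_set_common_witness by metis
  with T(4) le_set_trans have "lt_set a {a}" unfolding lt_set_def by blast
  with lt_set_irrefl show False by blast
qed

lemma not_ord_le_and_ord_lt: "\<not> (ord_le b [a] \<and> ord_lt a [b])"
  using le_set_lt_set_contra by (auto simp: ord_le_iff_le_set ord_lt_iff_lt_set)

lemma lt_set_osucc: "le_set a {b} \<Longrightarrow> lt_set a {osucc b}"
  unfolding lt_set_def osucc_def by (intro exI[of _ "{b}"]) (auto simp: children_def)

lemma le_set_funpow_osucc_self: "le_set a {(osucc ^^ k) a}"
  by (induction k) (auto simp: le_set_refl intro: lt_set_imp_le_set lt_set_osucc)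

lemma le_set_funpow_osucc:
  assumes "m \<le> n"
  shows "le_set ((osucc ^^ m) a) {(osucc ^^ n) a}"
proof -
  have "(osucc ^^ n) a = (osucc ^^ (n - m)) ((osucc ^^ m) a)"
    using assms by (metis funpow_add comp_apply le_add_diff_inverse2)
  then show ?thesis using le_set_funpow_osucc_self by metis
qed

lemma lt_set_funpow_osucc:
  assumes "m < n"
  shows "lt_set ((osucc ^^ m) a) {(osucc ^^ n) a}"
proof -
  obtain k where "n = Suc k" "m \<le> k" using assms by (cases n) auto
  then show ?thesis using lt_set_osucc[OF le_set_funpow_osucc] by simp
qed

lemma ord_lt_funpow_osucc_iff: "ord_lt ((osucc ^^ m) a) [(osucc ^^ n) a] \<longleftrightarrow> m < n"
proof
  assume "ord_lt ((osucc ^^ m) a) [(osucc ^^ n) a]"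
  then show "m < n"
    using le_set_funpow_osucc[of n m a] le_set_lt_set_contra
    by (auto simp: ord_lt_iff_lt_set not_less[symmetric])
qed (simp add: ord_lt_iff_lt_set lt_set_funpow_osucc)

lemma ord_eq_funpow_osucc_imp_eq:
  assumes "ord_eq ((osucc ^^ m) a) ((osucc ^^ n) a)"
  shows "m = n"
proof (rule ccontr)
  assume "m \<noteq> n"
  then have "ord_lt ((osucc ^^ m) a) [(osucc ^^ n) a] \<or> ord_lt ((osucc ^^ n) a) [(osucc ^^ m) a]"
    by (auto simp: ord_lt_funpow_osucc_iff)
  with assms not_ord_le_and_ord_lt show False by (auto simp: ord_eq_def)
qed

lemma onum_eq_funpow_osucc: "onum n = (osucc ^^ n) OZero"
  by (induction n) auto

theorem theorem4p9:
  fixes FF :: "'i set set"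
  assumes "index_family FF"
  shows "(\<forall>a b. in_ord FF a \<and> in_ord FF b \<longrightarrow> \<not> (ord_le b [a] \<and> ord_lt a [b]))
       \<and> (\<forall>m n :: nat. m < n \<longleftrightarrow> ord_lt (onum m :: 'i pord) [onum n])
       \<and> (\<forall>m n :: nat. ord_eq (onum m :: 'i pord) (onum n) \<longrightarrow> m = n)
       \<and> (\<forall>a m n. in_ord FF a \<and> m < n \<longrightarrow> \<not> ord_eq ((osucc ^^ n) a) ((osucc ^^ m) a))"
proof (intro conjI allI impI)
  show "\<not> (ord_le b [a] \<and> ord_lt a [b])" for a b :: "'i pord"
    by (rule not_ord_le_and_ord_lt)
  show "m < n \<longleftrightarrow> ord_lt (onum m :: 'i pord) [onum n]" for m n
    by (simp add: onum_eq_funpow_osucc ord_lt_funpow_osucc_iff)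
  show "m = n" if "ord_eq (onum m :: 'i pord) (onum n)" for m n
    using that by (simp add: onum_eq_funpow_osucc ord_eq_funpow_osucc_imp_eq)
  show "\<not> ord_eq ((osucc ^^ n) a) ((osucc ^^ m) a)" if "in_ord FF a \<and> m < n" for a m n
    using that ord_eq_funpow_osucc_imp_eq by fastforce
qed

end
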